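(* Let $n,k$ be integers with $8\le 2k\le n-2$ and let $\lambda\in\overline{\mathcal{U}}_{T_{n,n-2k+1}}$. Then the Young diagram $\mathrm{KN}(S_\lambda)$ has exactly $2n-4+2k$ cells; consequently the sum of the hook lengths of the cells on its main diagonal is $2n-4+2k$.
   Context: A partition of $N$ into distinct parts is a sequence $\lambda=(\lambda_1<\dots<\lambda_t)$ of positive integers with sum $N$ and $t\ge 2$, identified with its set of parts. Missing parts: $\mathcal{M}_\lambda=\{1,\dots,\lambda_t\}\setminus\lambda$. $\lambda$ is refinable if two distinct missing parts sum to a part of $\lambda$, unrefinable otherwise; $\mathcal{U}_N$ is the set of unrefinable partitions of $N$. An element of $\mathcal{U}_N$ is maximal if its largest part is the maximum of the largest parts of elements of $\mathcal{U}_N$; $\widetilde{\mathcal{U}}_N$ is the set of these and $\overline{\mathcal{U}}_N=\{\lambda\in\widetilde{\mathcal{U}}_N:\#\mathcal{M}_\lambda=\lfloor\lambda_t/2\rfloor\}$. $T_n=n(n+1)/2$, $T_{n,d}=T_n-d$. $S_\lambda=\mathbb{N}_0\setminus\lambda$. The Keith–Nath transformation sends a set $S\subseteq\mathbb{N}_0$ with $0\in S$ and finite complement to the Young diagram $\mathrm{KN}(S)$ whose boundary is the lattice path that, starting at the origin, takes for $j=0,1,\dots,\max(\mathbb{N}_0\setminus S)$ an east step if $j\in S$ and a north step otherwise. Hook length of a cell = (cells to its right in its row) + (cells below it in its column) + 1; the main diagonal consists of the cells in row $i$, column $i$. *)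

theory Defs
  imports Main
begin

text \<open>Partitions of N into distinct parts, identified with their (finite) set of positive parts.\<close>
definition distinct_partition :: "nat \<Rightarrow> nat set \<Rightarrow> bool" where
  "distinct_partition N lam \<longleftrightarrow> finite lam \<and> 0 \<notin> lam \<and> \<Sum>lam = N \<and> card lam \<ge> 2"

definition missing_parts :: "nat set \<Rightarrow> nat set" where
  "missing_parts lam = {1..Max lam} - lam"

definition refinable :: "nat set \<Rightarrow> bool" where
  "refinable lam \<longleftrightarrow>
     (\<exists>a b. a \<in> missing_parts lam \<and> b \<in> missing_parts lam \<and> a \<noteq> b \<and> a + b \<in> lam)"

definition unrefinable_parts :: "nat \<Rightarrow> nat set set" where
  "unrefinable_parts N = {lam. distinct_partition N lam \<and> \<not> refinable lam}"

definition maximal_unrefinable :: "nat \<Rightarrow> nat set set" where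
  "maximal_unrefinable N =
     {lam \<in> unrefinable_parts N. Max lam = (MAX mu \<in> unrefinable_parts N. Max mu)}"

definition maximal_unrefinable_bar :: "nat \<Rightarrow> nat set set" where
  "maximal_unrefinable_bar N =
     {lam \<in> maximal_unrefinable N. card (missing_parts lam) = Max lam div 2}"

definition T :: "nat \<Rightarrow> nat" where
  "T n = n * (n + 1) div 2"

definition Tnd :: "nat \<Rightarrow> nat \<Rightarrow> nat" where
  "Tnd n d = T n - d"

definition S_of :: "nat set \<Rightarrow> nat set" where
  "S_of lam = UNIV - lam"

text \<open>The lattice path takes, for j = 0..max gap, an east step
  if j is in S and a north step otherwise.  The north step produced by the gap g lies at
  x-coordinate card {s in S. s < g}, so the row of the Young diagram bounded by that north
  step has exactly that many cells.  We use English convention: row 0 (top) corresponds to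
  the largest gap, row i to the (i+1)-th largest gap.  Cells are pairs (row, column).\<close>
definition kn_gaps :: "nat set \<Rightarrow> nat list" where
  "kn_gaps S = rev (sorted_list_of_set (UNIV - S))"

definition kn_row :: "nat set \<Rightarrow> nat \<Rightarrow> nat" where
  "kn_row S i = card {s \<in> S. s < kn_gaps S ! i}"

definition KN :: "nat set \<Rightarrow> (nat \<times> nat) set" where
  "KN S = {(i, j). i < length (kn_gaps S) \<and> j < kn_row S i}"

definition hook_length :: "(nat \<times> nat) set \<Rightarrow> nat \<times> nat \<Rightarrow> nat" where
  "hook_length D c =
     card {j'. (fst c, j') \<in> D \<and> snd c < j'} + card {i'. (i', snd c) \<in> D \<and> fst c < i'} + 1"

definition main_diagonal :: "(nat \<times> nat) set \<Rightarrow> (nat \<times> nat) set" where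
  "main_diagonal D = {c \<in> D. fst c = snd c}"

end

theory Submission
  imports Defs
begin

text \<open>An unrefinable partition with largest part \<open>L\<close> misses at most \<open>L div 2\<close> of the
  numbers below \<open>L\<close>, since \<open>x\<close> and \<open>L - x\<close> cannot both be missing. Hence it has at least
  \<open>L - L div 2\<close> parts and its sum is at least \<open>L + T (L - L div 2 - 1)\<close>; for the sum
  \<open>T n - (n - 2k + 1)\<close> this forces \<open>L \<le> 2n - 4\<close>, and an explicit partition attains this
  bound. A maximal partition with exactly \<open>L div 2\<close> missing parts therefore has exactly \<open>n - 2\<close>
  parts. The row of the Keith--Nath diagram belonging to the part \<open>g\<close> has one cell for every
  non-part below \<open>g\<close>, so the diagram has \<open>\<Sum>\<lambda> - T (n - 3)\<close> cells, which is \<open>2n - 4 + 2k\<close>.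
  Finally, the hooks of the diagonal cells of any Young diagram partition its cells.\<close>

definition young_diagram :: "(nat \<times> nat) set \<Rightarrow> bool" where
  "young_diagram D \<longleftrightarrow> finite D \<and>
     (\<forall>i j i' j'. (i, j) \<in> D \<longrightarrow> i' \<le> i \<longrightarrow> j' \<le> j \<longrightarrow> (i', j') \<in> D)"

lemma sum_diagonal_hook_length_eq_card:
  assumes "young_diagram D"
  shows "(\<Sum>c\<in>main_diagonal D. hook_length D c) = card D"
proof -
  have fin: "finite D"
    and down: "\<And>i j i' j'. (i, j) \<in> D \<Longrightarrow> i' \<le> i \<Longrightarrow> j' \<le> j \<Longrightarrow> (i', j') \<in> D"
    using assms by (auto simp: young_diagram_def)
  \<comment> \<open>Every cell \<open>(i, j)\<close> lies in the hook of the diagonal cell \<open>(min i j, min i j)\<close>.\<close>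
  define diag :: "nat \<times> nat \<Rightarrow> nat \<times> nat" where
    "diag c = (min (fst c) (snd c), min (fst c) (snd c))" for c
  have diag_in: "diag ` D \<subseteq> main_diagonal D"
    by (auto simp: diag_def main_diagonal_def intro: down)
  have fiber: "card {c \<in> D. diag c = d} = hook_length D d" if diagonal: "d \<in> main_diagonal D" for d
  proof -
    obtain m where d: "d = (m, m)" "(m, m) \<in> D"
      using diagonal by (cases d) (auto simp: main_diagonal_def)
    define row where "row = {j. (m, j) \<in> D \<and> m < j}"
    define col where "col = {i. (i, m) \<in> D \<and> m < i}"
    have "row \<subseteq> snd ` D" "col \<subseteq> fst ` D"
      by (force simp: row_def col_def)+
    then have "finite row" "finite col"
      using fin by (meson finite_imageI finite_subset)+
    then have "card (Pair m ` row \<union> (\<lambda>i. (i, m)) ` col) = card row + card col"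
      by (subst card_Un_disjoint) (auto simp: row_def col_def card_image inj_on_def)
    moreover have "{c \<in> D. diag c = d} = insert (m, m) (Pair m ` row \<union> (\<lambda>i. (i, m)) ` col)"
      using d by (auto simp: diag_def row_def col_def min_def split: if_splits)
    moreover have "(m, m) \<notin> Pair m ` row \<union> (\<lambda>i. (i, m)) ` col"
      by (auto simp: row_def col_def)
    ultimately show ?thesis
      using \<open>finite row\<close> \<open>finite col\<close> by (simp add: d hook_length_def row_def col_def)
  qed
  have "card D = (\<Sum>d\<in>main_diagonal D. card {c \<in> D. diag c = d})"
    using sum.group[OF fin _ diag_in, of "\<lambda>_. 1::nat"] fin by (simp add: main_diagonal_def)
  also have "\<dots> = (\<Sum>d\<in>main_diagonal D. hook_length D d)"
    by (rule sum.cong) (simp_all add: fiber)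
  finally show ?thesis ..
qed

lemma kn_row_antimono:
  assumes "i \<le> i'" and "i' < length (kn_gaps S)"
  shows "kn_row S i' \<le> kn_row S i"
proof -
  have "kn_gaps S ! i' \<le> kn_gaps S ! i"
    using assms by (simp add: kn_gaps_def rev_nth sorted_nth_mono)
  then show ?thesis
    unfolding kn_row_def by (intro card_mono) auto
qed

lemma KN_eq_Sigma: "KN S = (SIGMA i:{..<length (kn_gaps S)}. {..<kn_row S i})"
  by (auto simp: KN_def)

lemma young_diagram_KN: "young_diagram (KN S)"
  unfolding young_diagram_def
proof (intro conjI allI impI)
  show "finite (KN S)"
    by (simp add: KN_eq_Sigma)
  fix i j i' j'
  assume "(i, j) \<in> KN S" "i' \<le> i" "j' \<le> j"
  then show "(i', j') \<in> KN S"
    using kn_row_antimono[of i' i S] by (auto simp: KN_def)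
qed

lemma card_KN_S_of:
  assumes "finite A"
  shows "card (KN (S_of A)) = (\<Sum>g\<in>A. card {s. s \<notin> A \<and> s < g})"
proof -
  define gaps where "gaps = rev (sorted_list_of_set A)"
  have "kn_gaps (S_of A) = gaps"
    by (simp add: kn_gaps_def S_of_def gaps_def Diff_Diff_Int)
  then have "card (KN (S_of A)) = (\<Sum>i<length gaps. card {s. s \<notin> A \<and> s < gaps ! i})"
    by (simp add: KN_eq_Sigma kn_row_def S_of_def)
  also have "\<dots> = sum_list (map (\<lambda>g. card {s. s \<notin> A \<and> s < g}) gaps)"
    by (simp add: sum_list_sum_nth atLeast0LessThan)
  also have "\<dots> = (\<Sum>g\<in>A. card {s. s \<notin> A \<and> s < g})"
    using assms by (simp add: gaps_def sum_list_distinct_conv_sum_set)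
  finally show ?thesis .
qed

lemma sum_card_nonmembers_below:
  assumes "finite A"
  shows "2 * (\<Sum>g\<in>A. card {s. s \<notin> A \<and> s < g}) + card A * (card A - 1) = 2 * \<Sum>A"
  using assms
proof (induction A rule: finite_linorder_max_induct)
  case empty
  then show ?case by simp
next
  case (insert b A)
  have below: "g < b" if "g \<in> A" for g
    using insert.hyps(2) that by blast
  have "(\<Sum>g\<in>A. card {s. s \<notin> insert b A \<and> s < g}) = (\<Sum>g\<in>A. card {s. s \<notin> A \<and> s < g})"
    by (intro sum.cong refl arg_cong[where f = card]) (auto dest: below)
  moreover have "{s. s \<notin> insert b A \<and> s < b} = {..<b} - A"
    by (auto dest: below)
  moreover have "A \<subseteq> {..<b}"
    by (auto dest: below)
  then have "card ({..<b} - A) = b - card A" and "card A \<le> b"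
    using card_mono[of "{..<b}" A] by (simp_all add: card_Diff_subset insert.hyps(1))
  moreover have "b \<notin> A"
    by (auto dest: below)
  ultimately show ?case
    using insert.IH insert.hyps(1) by (cases "card A") (auto simp: algebra_simps)
qed

lemma double_card_KN_S_of:
  assumes "finite A"
  shows "2 * card (KN (S_of A)) + card A * (card A - 1) = 2 * \<Sum>A"
  using sum_card_nonmembers_below[OF assms] by (simp add: card_KN_S_of[OF assms])

lemma triangular_le_sum:
  assumes "finite A" and "0 \<notin> A"
  shows "card A * (card A + 1) \<le> 2 * \<Sum>A"
proof -
  have "card A = (\<Sum>g\<in>A. 1)"
    by simp
  also have "\<dots> \<le> (\<Sum>g\<in>A. card {s. s \<notin> A \<and> s < g})"
  proof (rule sum_mono)
    fix g
    assume "g \<in> A"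
    then have "0 \<in> {s. s \<notin> A \<and> s < g}"
      using assms(2) by (auto intro: gr0I)
    then show "1 \<le> card {s. s \<notin> A \<and> s < g}"
      by (simp add: Suc_le_eq card_gt_0_iff) blast
  qed
  finally show ?thesis
    using sum_card_nonmembers_below[OF assms(1)] by (cases "card A") auto
qed

lemma double_sum_ge_Max_plus_triangular:
  assumes "finite A" and "0 \<notin> A" and "A \<noteq> {}"
  shows "2 * Max A + card A * (card A - 1) \<le> 2 * \<Sum>A"
proof -
  have "Max A \<in> A"
    using assms by simp
  then have "\<Sum>A = Max A + \<Sum>(A - {Max A})" and "card (A - {Max A}) = card A - 1"
    using assms(1) by (simp_all add: sum.remove)
  moreover have "card (A - {Max A}) * (card (A - {Max A}) + 1) \<le> 2 * \<Sum>(A - {Max A})"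
    using assms by (intro triangular_le_sum) auto
  moreover have "card A \<ge> 1"
    using assms by (simp add: Suc_le_eq card_gt_0_iff)
  ultimately show ?thesis
    by (simp add: algebra_simps)
qed

lemma card_add_card_missing_parts:
  assumes "finite lam" and "0 \<notin> lam"
  shows "card lam + card (missing_parts lam) = Max lam"
proof -
  have "lam \<subseteq> {1..Max lam}"
    using assms by (auto simp: Suc_le_eq intro: gr0I)
  then show ?thesis
    using card_mono[of "{1..Max lam}" lam] by (simp add: missing_parts_def card_Diff_subset assms(1))
qed

lemma card_missing_parts_le_half:
  assumes "finite lam" and "lam \<noteq> {}" and "\<not> refinable lam"
  shows "card (missing_parts lam) \<le> Max lam div 2"
proof -
  define L where "L = Max lam"
  have "L \<in> lam"
    using assms(1,2) by (simp add: L_def)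
  have missing: "1 \<le> x \<and> x < L" if "x \<in> missing_parts lam" for x
    using that \<open>L \<in> lam\<close> by (auto simp: missing_parts_def L_def order.order_iff_strict)
  \<comment> \<open>Since \<open>L\<close> is a part, each pair \<open>{x, L - x}\<close> contains at most one missing part.\<close>
  define rep where "rep x = min x (L - x)" for x
  have "inj_on rep (missing_parts lam)"
  proof (rule inj_onI)
    fix x y
    assume xy: "x \<in> missing_parts lam" "y \<in> missing_parts lam" "rep x = rep y"
    show "x = y"
    proof (rule ccontr)
      assume "x \<noteq> y"
      with xy missing have "x + y = L"
        by (force simp: rep_def min_def split: if_splits)
      with xy \<open>x \<noteq> y\<close> \<open>L \<in> lam\<close> assms(3) show False
        by (auto simp: refinable_def)
    qed
  qed
  moreover have "rep x \<in> {1..L div 2}" if "x \<in> missing_parts lam" for x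
    using missing[OF that] by (auto simp: rep_def min_def)
  ultimately have "card (missing_parts lam) \<le> card {1..L div 2}"
    by (intro card_inj_on_le) auto
  then show ?thesis
    by (simp add: L_def)
qed

lemma distinct_partition_double_sum_ge:
  assumes "distinct_partition N lam"
  shows "2 * Max lam + card lam * (card lam - 1) \<le> 2 * N"
proof -
  have "lam \<noteq> {}"
    using assms by (auto simp: distinct_partition_def)
  with assms show ?thesis
    using double_sum_ge_Max_plus_triangular[of lam] by (simp add: distinct_partition_def)
qed

lemma unrefinable_card_ge:
  assumes "distinct_partition N lam" and "\<not> refinable lam"
  shows "Max lam - Max lam div 2 \<le> card lam"
  using assms card_add_card_missing_parts[of lam] card_missing_parts_le_half[of lam]
  by (fastforce simp: distinct_partition_def)

lemma double_Tnd:
  assumes "2 * k \<le> n" and "2 \<le> n"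
  shows "2 * Tnd n (n - 2 * k + 1) + 2 = n * (n - 1) + 4 * k"
proof -
  obtain p where n: "n = p + 2"
    using assms(2) by (intro that[of "n - 2"]) simp
  have "2 * T n = n * (n + 1)"
    by (simp add: T_def)
  then show ?thesis
    using assms(1) by (simp add: Tnd_def n algebra_simps)
qed

lemma Max_unrefinable_parts_le:
  assumes "2 * k + 2 \<le> n" and "lam \<in> unrefinable_parts (Tnd n (n - 2 * k + 1))"
  shows "Max lam \<le> 2 * n - 4"
proof (rule ccontr)
  define N where "N = Tnd n (n - 2 * k + 1)"
  obtain p where n: "n = p + 2"
    using assms(1) by (intro that[of "n - 2"]) simp
  assume "\<not> Max lam \<le> 2 * n - 4"
  then have large: "2 * n - 3 \<le> Max lam"
    by simp
  have part: "distinct_partition N lam" and "\<not> refinable lam"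
    using assms(2) by (auto simp: unrefinable_parts_def N_def)
  then have "Max lam - Max lam div 2 \<le> card lam"
    by (rule unrefinable_card_ge)
  then have "n - 1 \<le> card lam"
    using large by linarith
  then have "(n - 1) * (n - 2) \<le> card lam * (card lam - 1)"
    by (intro mult_le_mono) auto
  with distinct_partition_double_sum_ge[OF part]
  have "2 * Max lam + (n - 1) * (n - 2) \<le> 2 * N"
    by linarith
  moreover have "2 * N + 2 = n * (n - 1) + 4 * k"
    unfolding N_def using assms(1) by (intro double_Tnd) auto
  ultimately show False
    using large assms(1) by (simp add: n algebra_simps)
qed

definition extremal_partition :: "nat \<Rightarrow> nat \<Rightarrow> nat set" where
  "extremal_partition n k = ({1..n - 4} - {n - 1 - k}) \<union> {n - 1, n - 3 + k, 2 * n - 4}"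

lemma extremal_partition_shifted:
  assumes "k = j + 4" and "n = 2 * j + m + 10"
  shows "extremal_partition n k =
    ({1..2 * j + m + 6} - {j + m + 5}) \<union> {2 * j + m + 9, 3 * j + m + 11, 4 * j + 2 * m + 16}"
  by (simp add: extremal_partition_def assms algebra_simps)

lemma
  assumes "4 \<le> k" and "2 * k + 2 \<le> n"
  shows Max_extremal_partition: "Max (extremal_partition n k) = 2 * n - 4"
    and extremal_partition_in_unrefinable_parts:
      "extremal_partition n k \<in> unrefinable_parts (Tnd n (n - 2 * k + 1))"
proof -
  obtain j where k: "k = j + 4"
    using le_Suc_ex[OF assms(1)] by (auto simp: add.commute)
  obtain m where n: "n = 2 * j + m + 10"
    using le_Suc_ex[OF assms(2)] by (auto simp: k)
  define lam where "lam = extremal_partition n k"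
  have lam: "lam =
    ({1..2 * j + m + 6} - {j + m + 5}) \<union> {2 * j + m + 9, 3 * j + m + 11, 4 * j + 2 * m + 16}"
    unfolding lam_def by (rule extremal_partition_shifted[OF k n])
  show "Max lam = 2 * n - 4"
    unfolding lam n by (rule Max_eqI) auto
  then have missing: "a \<in> missing_parts lam \<longleftrightarrow> 1 \<le> a \<and> a \<le> 4 * j + 2 * m + 16 \<and> a \<notin> lam" for a
    by (auto simp: missing_parts_def n)
  have "\<not> refinable lam"
  proof
    assume "refinable lam"
    then obtain a b where a: "a \<in> missing_parts lam" and b: "b \<in> missing_parts lam"
      and "a \<noteq> b" and sum: "a + b \<in> lam"
      by (auto simp: refinable_def)
    have "x = j + m + 5 \<or> 2 * j + m + 6 < x" "x \<noteq> 2 * j + m + 9" "x \<noteq> 3 * j + m + 11"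
      if "x \<in> missing_parts lam" for x
      using that[unfolded missing] unfolding lam by auto
    note a' = this[OF a] and b' = this[OF b]
    have "a + b \<le> 2 * j + m + 6 \<or> a + b = 2 * j + m + 9 \<or> a + b = 3 * j + m + 11
        \<or> a + b = 4 * j + 2 * m + 16"
      using sum unfolding lam by auto
    with a' b' \<open>a \<noteq> b\<close> show False
      by (elim disjE) linarith+
  qed
  have "\<Sum>{1..2 * j + m + 6} = j + m + 5 + \<Sum>({1..2 * j + m + 6} - {j + m + 5})"
    by (intro sum.remove) auto
  moreover have "2 * \<Sum>{1..2 * j + m + 6} = (2 * j + m + 6) * (2 * j + m + 7)"
    using double_gauss_sum_from_Suc_0[of "2 * j + m + 6", where 'a = nat] by simp
  moreover have "\<Sum>lam = \<Sum>({1..2 * j + m + 6} - {j + m + 5}) + (9 * j + 4 * m + 36)"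
    unfolding lam by simp
  ultimately have "2 * \<Sum>lam + 2 = n * (n - 1) + 4 * k"
    by (simp add: n k algebra_simps)
  also have "\<dots> = 2 * Tnd n (n - 2 * k + 1) + 2"
    using assms by (intro double_Tnd[symmetric]) auto
  finally have "\<Sum>lam = Tnd n (n - 2 * k + 1)"
    by simp
  moreover have "card lam \<ge> 2" "0 \<notin> lam" "finite lam"
    unfolding lam by auto
  ultimately show "lam \<in> unrefinable_parts (Tnd n (n - 2 * k + 1))"
    using \<open>\<not> refinable lam\<close> by (simp add: unrefinable_parts_def distinct_partition_def)
qed

lemma Max_largest_part_unrefinable_parts:
  assumes "4 \<le> k" and "2 * k + 2 \<le> n"
  shows "(MAX mu \<in> unrefinable_parts (Tnd n (n - 2 * k + 1)). Max mu) = 2 * n - 4"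
proof (rule Max_eqI)
  have "Max ` unrefinable_parts (Tnd n (n - 2 * k + 1)) \<subseteq> {..2 * n - 4}"
    using Max_unrefinable_parts_le[OF assms(2)] by auto
  then show "finite (Max ` unrefinable_parts (Tnd n (n - 2 * k + 1)))"
    by (rule finite_subset) simp
  show "y \<le> 2 * n - 4" if "y \<in> Max ` unrefinable_parts (Tnd n (n - 2 * k + 1))" for y
    using that Max_unrefinable_parts_le[OF assms(2)] by auto
  show "2 * n - 4 \<in> Max ` unrefinable_parts (Tnd n (n - 2 * k + 1))"
    using Max_extremal_partition[OF assms] extremal_partition_in_unrefinable_parts[OF assms]
    by (metis image_eqI)
qed

theorem proposition5p1:
  fixes n k :: nat and lam :: "nat set"
  assumes "8 \<le> 2 * k" and "2 * k \<le> n - 2"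
    and "lam \<in> maximal_unrefinable_bar (Tnd n (n - 2 * k + 1))"
  shows "card (KN (S_of lam)) = 2 * n - 4 + 2 * k
    \<and> (\<Sum>c \<in> main_diagonal (KN (S_of lam)). hook_length (KN (S_of lam)) c) = 2 * n - 4 + 2 * k"
proof -
  have k: "4 \<le> k" and n: "2 * k + 2 \<le> n"
    using assms(1,2) by auto
  define N where "N = Tnd n (n - 2 * k + 1)"
  have "lam \<in> unrefinable_parts N" and "Max lam = 2 * n - 4"
    and "card (missing_parts lam) = n - 2"
    using assms(3) Max_largest_part_unrefinable_parts[OF k n]
    by (auto simp: maximal_unrefinable_bar_def maximal_unrefinable_def N_def)
  then have "finite lam" "0 \<notin> lam" "\<Sum>lam = N" "card lam = n - 2"
    using card_add_card_missing_parts[of lam] by (auto simp: unrefinable_parts_def distinct_partition_def)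
  then have "2 * card (KN (S_of lam)) + (n - 2) * (n - 3) = 2 * N"
    using double_card_KN_S_of[of lam] by simp
  moreover have "2 * N + 2 = n * (n - 1) + 4 * k"
    unfolding N_def using n by (intro double_Tnd) auto
  moreover obtain p where "n = p + 3"
    using n k by (intro that[of "n - 3"]) simp
  ultimately have "card (KN (S_of lam)) = 2 * n - 4 + 2 * k"
    by (simp add: algebra_simps)
  then show ?thesis
    by (simp add: sum_diagonal_hook_length_eq_card[OF young_diagram_KN])
qed

end
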